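(* Let $p$ be prime, $G=\mathbb{Z}_{p^2}\times\mathbb{Z}_p$, and $A\subset G$ with $\#A>p^2$. Then for every $\mathbf{d}\in G\setminus\{0\}$ we have $(A-A)\cap\mathbf{d}G^*\neq\emptyset$.
   Context: $G^*$ denotes the set of invertible elements of the ring $G=\mathbb{Z}_{p^2}\times\mathbb{Z}_p$, i.e. pairs $(u_1,u_2)$ with $u_1\in\mathbb{Z}_{p^2}^*$, $u_2\in\mathbb{Z}_p^*$; for $\mathbf{d}=(d_1,d_2)$, $\mathbf{d}G^*=\{(d_1u_1,d_2u_2):(u_1,u_2)\in G^*\}$. $A-A=\{a-a':a,a'\in A\}$. *)

theory Defs
  imports "HOL-Number_Theory.Number_Theory"
begin

text \<open>The group G = Z_{p^2} x Z_p, represented by canonical residues: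
  pairs (x1,x2) of integers with 0 <= x1 < p^2 and 0 <= x2 < p.\<close>

definition Gset :: "int \<Rightarrow> (int \<times> int) set" where
  "Gset p = {0..<p^2} \<times> {0..<p}"

definition Gsub :: "int \<Rightarrow> int \<times> int \<Rightarrow> int \<times> int \<Rightarrow> int \<times> int" where
  "Gsub p a b = ((fst a - fst b) mod p^2, (snd a - snd b) mod p)"

definition diffset :: "int \<Rightarrow> (int \<times> int) set \<Rightarrow> (int \<times> int) set" where
  "diffset p A = {Gsub p a a' | a a'. a \<in> A \<and> a' \<in> A}"

definition Gunits :: "int \<Rightarrow> (int \<times> int) set" where
  "Gunits p = {u \<in> Gset p. coprime (fst u) (p^2) \<and> coprime (snd u) p}"

definition dGunits :: "int \<Rightarrow> int \<times> int \<Rightarrow> (int \<times> int) set" where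
  "dGunits p d = {((fst d * fst u) mod p^2, (snd d * snd u) mod p) | u. u \<in> Gunits p}"

end

theory Submission
  imports Defs
begin

text \<open>Colour \<open>G\<close> with \<open>p\<^sup>2\<close> colours so that two distinct points of the same colour always
  differ by \<open>(d\<^sub>1 t, d\<^sub>2 t)\<close> for some unit \<open>t\<close>; pigeonhole on \<open>A\<close> then gives the claim.
  The colouring depends on the \<open>p\<close>-adic valuation of \<open>d\<^sub>1\<close>.  If \<open>d\<^sub>1\<close> is a unit with inverse
  \<open>i\<close>, colour \<open>x\<close> by \<open>(\<lfloor>x\<^sub>1/p\<rfloor>, x\<^sub>2 - d\<^sub>2 i x\<^sub>1 mod p)\<close>: equal colours force
  \<open>0 < |x\<^sub>1 - x\<^sub>1'| < p\<close>, and \<open>t = (x\<^sub>1 - x\<^sub>1') i\<close>.  If \<open>d\<^sub>1 = p e\<close> with \<open>e\<close> invertible modulo \<open>p\<close>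
  with inverse \<open>i\<close>, colour \<open>x\<close> by \<open>(x\<^sub>1 mod p, x\<^sub>2 - d\<^sub>2 i \<lfloor>x\<^sub>1/p\<rfloor> mod p)\<close>: now
  \<open>x\<^sub>1 - x\<^sub>1' = p m\<close> with \<open>0 < |m| < p\<close>, and \<open>t = m i\<close>.  If \<open>d\<^sub>1 = 0\<close> then \<open>d\<^sub>2\<close> is a unit and
  the colour is \<open>x\<^sub>1\<close> itself.\<close>

definition dG_colouring :: "int \<Rightarrow> int \<times> int \<Rightarrow> (int \<times> int \<Rightarrow> int \<times> int) \<Rightarrow> bool" where
  "dG_colouring p d f \<longleftrightarrow> f ` Gset p \<subseteq> {0..<p} \<times> {0..<p} \<and>
     (\<forall>x\<in>Gset p. \<forall>x'\<in>Gset p. x \<noteq> x' \<and> f x = f x' \<longrightarrow> Gsub p x x' \<in> dGunits p d)"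

lemma diffset_inter_dGunits_nonempty_if_colouring:
  fixes p :: int
  assumes "dG_colouring p d f" and "A \<subseteq> Gset p" and "card A > p^2"
  shows "diffset p A \<inter> dGunits p d \<noteq> {}"
proof -
  have colours: "f ` A \<subseteq> {0..<p} \<times> {0..<p}"
    using assms(1,2) unfolding dG_colouring_def by blast
  have "card (f ` A) \<le> card ({0..<p} \<times> {0..<p})"
    by (rule card_mono[OF _ colours]) simp
  also have "\<dots> = nat p * nat p"
    by (simp add: card_cartesian_product)
  finally have "int (card (f ` A)) \<le> int (nat p * nat p)"
    by linarith
  also have "\<dots> \<le> p^2"
    by (cases "p \<ge> 0") (simp_all add: power2_eq_square)
  finally have "card (f ` A) < card A"
    using assms(3) by linarith
  then have "\<not> inj_on f A"
    using card_image by fastforce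
  then obtain x x' where "x \<in> A" "x' \<in> A" "x \<noteq> x'" "f x = f x'"
    unfolding inj_on_def by blast
  moreover from this have "Gsub p x x' \<in> diffset p A"
    unfolding diffset_def by blast
  ultimately show ?thesis
    using assms(1,2) unfolding dG_colouring_def by blast
qed

lemma coprime_if_abs_less_prime:
  fixes p k :: int
  assumes "prime p" and "k \<noteq> 0" and "\<bar>k\<bar> < p"
  shows "coprime k p"
proof -
  have "\<not> p dvd k"
    using assms dvd_imp_le_int[of k p] by auto
  then show ?thesis
    using assms(1) prime_imp_coprime coprime_commute by blast
qed

lemma Gsub_in_dGunits:
  fixes p t :: int
  assumes "prime p" and "coprime t p"
    and "[fst x - fst x' = fst d * t] (mod p^2)"
    and "[snd x - snd x' = snd d * t] (mod p)"
  shows "Gsub p x x' \<in> dGunits p d"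
proof -
  have p: "p > 1"
    using assms(1) prime_gt_1_int by blast
  define u where "u = (t mod p^2, t mod p)"
  have "coprime t (p^2)"
    using assms(2) by simp
  then have "coprime (t mod p^2) (p^2)"
    using p by (subst coprime_mod_left_iff) auto
  moreover have "coprime (t mod p) p"
    using assms(2) p by simp
  ultimately have "u \<in> Gunits p"
    unfolding Gunits_def Gset_def u_def using p by auto
  moreover have "Gsub p x x' = ((fst d * fst u) mod p^2, (snd d * snd u) mod p)"
    using assms(3,4) unfolding Gsub_def u_def cong_def by (simp add: mod_mult_right_eq)
  ultimately show ?thesis
    unfolding dGunits_def by blast
qed

lemma Gset_memD:
  "x \<in> Gset p \<Longrightarrow> 0 \<le> fst x \<and> fst x < p^2 \<and> 0 \<le> snd x \<and> snd x < p"
  unfolding Gset_def by auto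

lemma Gset_eqI:
  assumes "x \<in> Gset p" "x' \<in> Gset p" "fst x = fst x'" "[snd x = snd x'] (mod p)"
  shows "x = x'"
proof -
  have "snd x = snd x'"
    using assms(4) Gset_memD[OF assms(1)] Gset_memD[OF assms(2)] by (intro cong_less_imp_eq_int) auto
  then show ?thesis
    using assms(3) by (simp add: prod_eq_iff)
qed

lemma div_mod_in_range_if_less_square:
  fixes a p :: int
  assumes "p > 0" "0 \<le> a" "a < p^2"
  shows "a div p \<in> {0..<p}" "a mod p \<in> {0..<p}"
proof -
  have "p * (a div p) \<le> a"
    using pos_mod_sign[OF assms(1), of a] mult_div_mod_eq[of p a] by linarith
  then have "p * (a div p) < p * p"
    using assms(3) by (simp add: power2_eq_square)
  then have "a div p < p"
    using assms(1) by simp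
  then show "a div p \<in> {0..<p}"
    using assms by (simp add: pos_imp_zdiv_nonneg_iff)
  show "a mod p \<in> {0..<p}"
    using assms(1) by simp
qed

lemma cong_diff_if_cong_sub_mult:
  fixes a a' b b' c m :: int
  assumes "[a - c * b = a' - c * b'] (mod m)"
  shows "[a - a' = c * (b - b')] (mod m)"
  using assms by (simp add: cong_iff_dvd_diff algebra_simps)

lemma coprime_if_cong_mult_eq_1:
  fixes a i m :: int
  assumes "[a * i = 1] (mod m)"
  shows "coprime i m"
  using cong_imp_coprime[OF cong_sym[OF assms]] by simp

lemma cong_eq_mult_mult_inverse:
  fixes a i k m :: int
  assumes "[a * i = 1] (mod m)"
  shows "[k = a * (k * i)] (mod m)"
  using cong_scalar_left[OF assms, of k] by (simp add: ac_simps cong_sym_eq)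

lemma dG_colouring_if_coprime_fst:
  fixes p :: int and d :: "int \<times> int"
  assumes "prime p" and "coprime (fst d) p"
  shows "\<exists>f. dG_colouring p d f"
proof -
  have p: "p > 0"
    using assms(1) prime_gt_0_int by blast
  have "coprime (fst d) (p^2)"
    using assms(2) by simp
  then obtain i where i: "[fst d * i = 1] (mod p^2)"
    using cong_solve_coprime_int by blast
  then have "coprime i p"
    using coprime_if_cong_mult_eq_1[OF i] by simp
  define f where "f x = (fst x div p, (snd x - snd d * i * fst x) mod p)" for x
  have "dG_colouring p d f"
    unfolding dG_colouring_def
  proof (intro conjI ballI impI)
    show "f ` Gset p \<subseteq> {0..<p} \<times> {0..<p}"
      using div_mod_in_range_if_less_square[OF p] Gset_memD p by (fastforce simp: f_def)
    fix x x' assume x: "x \<in> Gset p" and x': "x' \<in> Gset p" and "x \<noteq> x' \<and> f x = f x'"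
    then have "x \<noteq> x'" and same_div: "fst x div p = fst x' div p"
      and "[snd x - snd d * i * fst x = snd x' - snd d * i * fst x'] (mod p)"
      by (simp_all add: f_def cong_def)
    define k where "k = fst x - fst x'"
    have snd_cong: "[snd x - snd x' = snd d * i * k] (mod p)"
      unfolding k_def by (rule cong_diff_if_cong_sub_mult) fact
    have "k \<noteq> 0"
    proof
      assume "k = 0"
      then have "[snd x = snd x'] (mod p)"
        using snd_cong by (simp add: cong_iff_dvd_diff)
      then show False
        using Gset_eqI[OF x x'] \<open>k = 0\<close> \<open>x \<noteq> x'\<close> k_def by simp
    qed
    moreover have "\<bar>k\<bar> < p"
      using same_div mult_div_mod_eq[of p "fst x"] mult_div_mod_eq[of p "fst x'"]
        pos_mod_bound[OF p] pos_mod_sign[OF p] unfolding k_def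
      by (smt (verit))
    ultimately have "coprime k p"
      using assms(1) coprime_if_abs_less_prime by blast
    show "Gsub p x x' \<in> dGunits p d"
    proof (rule Gsub_in_dGunits[where t = "k * i"])
      show "coprime (k * i) p"
        using \<open>coprime k p\<close> \<open>coprime i p\<close> by simp
      show "[fst x - fst x' = fst d * (k * i)] (mod p^2)"
        unfolding k_def by (rule cong_eq_mult_mult_inverse) fact
      show "[snd x - snd x' = snd d * (k * i)] (mod p)"
        using snd_cong by (simp add: ac_simps)
    qed fact
  qed
  then show ?thesis
    by blast
qed

lemma dG_colouring_if_fst_eq_prime_times_coprime:
  fixes p e :: int and d :: "int \<times> int"
  assumes "prime p" and "fst d = p * e" and "coprime e p"
  shows "\<exists>f. dG_colouring p d f"
proof -
  have p: "p > 0"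
    using assms(1) prime_gt_0_int by blast
  obtain i where i: "[e * i = 1] (mod p)"
    using assms(3) cong_solve_coprime_int by blast
  then have "coprime i p"
    by (rule coprime_if_cong_mult_eq_1)
  define f where "f x = (fst x mod p, (snd x - snd d * i * (fst x div p)) mod p)" for x
  have "dG_colouring p d f"
    unfolding dG_colouring_def
  proof (intro conjI ballI impI)
    show "f ` Gset p \<subseteq> {0..<p} \<times> {0..<p}"
      using p by (auto simp: f_def)
    fix x x' assume x: "x \<in> Gset p" and x': "x' \<in> Gset p" and "x \<noteq> x' \<and> f x = f x'"
    then have "x \<noteq> x'" and same_mod: "fst x mod p = fst x' mod p"
      and "[snd x - snd d * i * (fst x div p) = snd x' - snd d * i * (fst x' div p)] (mod p)"
      by (simp_all add: f_def cong_def)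
    define m where "m = fst x div p - fst x' div p"
    have fst_diff: "fst x - fst x' = p * m"
      using same_mod mult_div_mod_eq[of p "fst x"] mult_div_mod_eq[of p "fst x'"]
      unfolding m_def right_diff_distrib by linarith
    have snd_cong: "[snd x - snd x' = snd d * i * m] (mod p)"
      unfolding m_def by (rule cong_diff_if_cong_sub_mult) fact
    have "m \<noteq> 0"
    proof
      assume "m = 0"
      then have "[snd x = snd x'] (mod p)"
        using snd_cong by (simp add: cong_iff_dvd_diff)
      then show False
        using Gset_eqI[OF x x'] \<open>m = 0\<close> \<open>x \<noteq> x'\<close> fst_diff by simp
    qed
    moreover have "\<bar>m\<bar> < p"
      using div_mod_in_range_if_less_square(1)[OF p, of "fst x"] div_mod_in_range_if_less_square(1)[OF p, of "fst x'"]
        Gset_memD[OF x] Gset_memD[OF x'] unfolding m_def by auto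
    ultimately have "coprime m p"
      using assms(1) coprime_if_abs_less_prime by blast
    show "Gsub p x x' \<in> dGunits p d"
    proof (rule Gsub_in_dGunits[where t = "m * i"])
      show "coprime (m * i) p"
        using \<open>coprime m p\<close> \<open>coprime i p\<close> by simp
      have "[p * m = p * (e * (m * i))] (mod p * p)"
        using cong_eq_mult_mult_inverse[OF i, of m] by (rule cong_cmult_leftI)
      then show "[fst x - fst x' = fst d * (m * i)] (mod p^2)"
        using fst_diff assms(2) by (simp add: power2_eq_square ac_simps)
      show "[snd x - snd x' = snd d * (m * i)] (mod p)"
        using snd_cong by (simp add: ac_simps)
    qed fact
  qed
  then show ?thesis
    by blast
qed

lemma dG_colouring_if_fst_eq_0:
  fixes p :: int and d :: "int \<times> int"
  assumes "prime p" and "fst d = 0" and "coprime (snd d) p"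
  shows "\<exists>f. dG_colouring p d f"
proof -
  have p: "p > 0"
    using assms(1) prime_gt_0_int by blast
  obtain i where i: "[snd d * i = 1] (mod p)"
    using assms(3) cong_solve_coprime_int by blast
  then have "coprime i p"
    by (rule coprime_if_cong_mult_eq_1)
  define f :: "int \<times> int \<Rightarrow> int \<times> int" where "f x = (fst x div p, fst x mod p)" for x
  have "dG_colouring p d f"
    unfolding dG_colouring_def
  proof (intro conjI ballI impI)
    show "f ` Gset p \<subseteq> {0..<p} \<times> {0..<p}"
      using div_mod_in_range_if_less_square[OF p] Gset_memD by (fastforce simp: f_def)
    fix x x' assume x: "x \<in> Gset p" and x': "x' \<in> Gset p" and "x \<noteq> x' \<and> f x = f x'"
    then have "x \<noteq> x'" and "fst x div p = fst x' div p" and "fst x mod p = fst x' mod p"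
      by (simp_all add: f_def)
    then have "fst x = fst x'"
      by (metis mult_div_mod_eq)
    define k where "k = snd x - snd x'"
    have "k \<noteq> 0"
      using \<open>x \<noteq> x'\<close> \<open>fst x = fst x'\<close> unfolding k_def by (simp add: prod_eq_iff)
    moreover have "\<bar>k\<bar> < p"
      using Gset_memD[OF x] Gset_memD[OF x'] unfolding k_def by auto
    ultimately have "coprime k p"
      using assms(1) coprime_if_abs_less_prime by blast
    show "Gsub p x x' \<in> dGunits p d"
    proof (rule Gsub_in_dGunits[where t = "k * i"])
      show "coprime (k * i) p"
        using \<open>coprime k p\<close> \<open>coprime i p\<close> by simp
      show "[fst x - fst x' = fst d * (k * i)] (mod p^2)"
        using \<open>fst x = fst x'\<close> assms(2) by simp
      show "[snd x - snd x' = snd d * (k * i)] (mod p)"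
        unfolding k_def by (rule cong_eq_mult_mult_inverse) fact
    qed fact
  qed
  then show ?thesis
    by blast
qed

lemma dG_colouring_exists:
  fixes p :: int and d :: "int \<times> int"
  assumes "prime p" and "d \<in> Gset p" and "d \<noteq> (0, 0)"
  shows "\<exists>f. dG_colouring p d f"
proof (cases "p dvd fst d")
  case False
  then have "coprime (fst d) p"
    using assms(1) prime_imp_coprime coprime_commute by blast
  then show ?thesis
    using assms(1) dG_colouring_if_coprime_fst by blast
next
  case True
  then obtain e where e: "fst d = p * e"
    by blast
  have p: "p > 0"
    using assms(1) prime_gt_0_int by blast
  have d: "0 \<le> fst d" "fst d < p^2" "0 \<le> snd d" "snd d < p"
    using Gset_memD[OF assms(2)] by auto
  show ?thesis
  proof (cases "e = 0")
    case True
    then have "snd d \<noteq> 0"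
      using e assms(3) by (simp add: prod_eq_iff)
    then have "coprime (snd d) p"
      using d assms(1) coprime_if_abs_less_prime by simp
    then show ?thesis
      using assms(1) e True dG_colouring_if_fst_eq_0 by simp
  next
    case False
    have "0 < e"
      using d(1) e p False by (simp add: zero_le_mult_iff)
    moreover have "e < p"
      using d(2) e p by (simp add: power2_eq_square)
    ultimately have "coprime e p"
      using assms(1) coprime_if_abs_less_prime by simp
    then show ?thesis
      using assms(1) e dG_colouring_if_fst_eq_prime_times_coprime by blast
  qed
qed

theorem lemma5p1:
  fixes p :: int and A :: "(int \<times> int) set" and d :: "int \<times> int"
  assumes "prime p"
    and "A \<subseteq> Gset p"
    and "card A > p^2"
    and "d \<in> Gset p" and "d \<noteq> (0, 0)"
  shows "diffset p A \<inter> dGunits p d \<noteq> {}"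
proof -
  obtain f where "dG_colouring p d f"
    using dG_colouring_exists[OF assms(1,4,5)] by blast
  then show ?thesis
    using diffset_inter_dGunits_nonempty_if_colouring assms(2,3) by blast
qed

end
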